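(* Let $(z_1,\dots,z_n)$ be coordinates on $\mathbb{R}^n$ and let $g$ be a pseudo-Riemannian metric on $\mathbb{R}^n$ whose Levi-Civita connection satisfies, for all $a,b$, $$\nabla_{\partial_a^z}\partial_b^z=\sum_{c>\max(a,b)}\Gamma_{ab}{}^c(z_1,\dots,z_{c-1})\,\partial_c^z,$$ i.e. $\nabla_{\partial_a^z}\partial_b^z$ has components only in directions $\partial_c^z$ with $c>a$ and $c>b$, and the coefficient $\Gamma_{ab}{}^c$ depends only on $z_1,\dots,z_{c-1}$. Then: (1) $(\mathbb{R}^n,g)$ is complete, i.e. all geodesics are defined for all time; (2) for every $P\in\mathbb{R}^n$, $\exp_P:T_P\mathbb{R}^n\to\mathbb{R}^n$ is a diffeomorphism.
   Context: $\partial_a^z=\partial/\partial z_a$. *)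

theory Defs
  imports "HOL-Analysis.Analysis"
begin

text \<open>Coordinates z_1,...,z_n on R^n: vectors real^'n, the index type 'n is a finite
  linearly ordered type (the order of the coordinates).\<close>

definition partial_deriv :: "'n::finite \<Rightarrow> (real^'n \<Rightarrow> real) \<Rightarrow> real^'n \<Rightarrow> real" where
  "partial_deriv i f x = deriv (\<lambda>t. f (x + t *\<^sub>R axis i 1)) 0"

fun Ck :: "nat \<Rightarrow> (real^'n::finite \<Rightarrow> real) \<Rightarrow> bool" where
  "Ck 0 f = continuous_on UNIV f"
| "Ck (Suc k) f = (continuous_on UNIV f \<and>
      (\<forall>i x. (\<lambda>t. f (x + t *\<^sub>R axis i 1)) differentiable (at 0)) \<and>
      (\<forall>i. Ck k (partial_deriv i f)))"

definition smooth_fun :: "(real^'n::finite \<Rightarrow> real) \<Rightarrow> bool" where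
  "smooth_fun f \<longleftrightarrow> (\<forall>k. Ck k f)"

definition smooth_map :: "(real^'n::finite \<Rightarrow> real^'m::finite) \<Rightarrow> bool" where
  "smooth_map F \<longleftrightarrow> (\<forall>j. smooth_fun (\<lambda>x. F x $ j))"

definition diffeomorphism :: "(real^'n::finite \<Rightarrow> real^'n) \<Rightarrow> bool" where
  "diffeomorphism F \<longleftrightarrow> bij F \<and> smooth_map F \<and> smooth_map (inv F)"

definition pseudo_riemannian_metric :: "(real^'n::finite \<Rightarrow> real^'n^'n) \<Rightarrow> bool" where
  "pseudo_riemannian_metric g \<longleftrightarrow>
     (\<forall>i j. smooth_fun (\<lambda>z. g z $ i $ j)) \<and>
     (\<forall>z. transpose (g z) = g z \<and> invertible (g z))"

text \<open>Christoffel symbols of the Levi-Civita connection: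
  nabla_{d_a} d_b = sum_c christoffel g c a b * d_c, where
  Gamma_ab^c = 1/2 g^{cd} (d_a g_{bd} + d_b g_{ad} - d_d g_{ab}).\<close>
definition christoffel :: "(real^'n::finite \<Rightarrow> real^'n^'n) \<Rightarrow> 'n \<Rightarrow> 'n \<Rightarrow> 'n \<Rightarrow> real^'n \<Rightarrow> real" where
  "christoffel g c a b z = (1/2) * (\<Sum>d\<in>UNIV. matrix_inv (g z) $ c $ d *
      (partial_deriv a (\<lambda>w. g w $ b $ d) z + partial_deriv b (\<lambda>w. g w $ a $ d) z
       - partial_deriv d (\<lambda>w. g w $ a $ b) z))"

definition is_geodesic :: "(real^'n::finite \<Rightarrow> real^'n^'n) \<Rightarrow> real set \<Rightarrow> (real \<Rightarrow> real^'n) \<Rightarrow> bool" where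
  "is_geodesic g I \<gamma> \<longleftrightarrow> open I \<and> is_interval I \<and>
     (\<exists>\<gamma>' \<gamma>''. \<forall>t\<in>I. (\<gamma> has_vector_derivative \<gamma>' t) (at t) \<and>
        (\<gamma>' has_vector_derivative \<gamma>'' t) (at t) \<and>
        (\<forall>c. \<gamma>'' t $ c + (\<Sum>a\<in>UNIV. \<Sum>b\<in>UNIV. christoffel g c a b (\<gamma> t) * \<gamma>' t $ a * \<gamma>' t $ b) = 0))"

definition geodesically_complete :: "(real^'n::finite \<Rightarrow> real^'n^'n) \<Rightarrow> bool" where
  "geodesically_complete g \<longleftrightarrow>
     (\<forall>I \<gamma>. is_geodesic g I \<gamma> \<longrightarrow> (\<exists>\<delta>. is_geodesic g UNIV \<delta> \<and> (\<forall>t\<in>I. \<delta> t = \<gamma> t)))"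

text \<open>Exponential map at P: exp_P v = gamma(1) for the geodesic with gamma(0)=P, gamma'(0)=v
  (T_P R^n identified with R^n).\<close>
definition exp_map :: "(real^'n::finite \<Rightarrow> real^'n^'n) \<Rightarrow> real^'n \<Rightarrow> real^'n \<Rightarrow> real^'n" where
  "exp_map g P v = (THE q. \<exists>I \<gamma>. {0..1} \<subseteq> I \<and> is_geodesic g I \<gamma> \<and> \<gamma> 0 = P \<and>
       vector_derivative \<gamma> (at 0) = v \<and> \<gamma> 1 = q)"

end

theory Submission
  imports Defs
begin

text \<open>By the hypotheses on the Christoffel symbols, the \<open>c\<close>-th component of the geodesic
  equation \<open>\<gamma>\<^sub>c'' + \<Sum>\<^sub>a\<^sub>b \<Gamma>\<^sub>a\<^sub>b\<^sup>c(\<gamma>) \<gamma>\<^sub>a' \<gamma>\<^sub>b' = 0\<close> only involves \<open>\<gamma>\<^sub>j\<close> and \<open>\<gamma>\<^sub>j'\<close> for \<open>j < c\<close>.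
  So the geodesic with \<open>\<gamma>(0) = P\<close>, \<open>\<gamma>'(0) = v\<close> is found coordinate by coordinate by
  integrating twice: it is unique, exists for all time and depends smoothly on \<open>(v, t)\<close>.
  For the same reason \<open>exp\<^sub>P(v)\<^sub>c - v\<^sub>c\<close> is a smooth function of \<open>v\<^sub>1, ..., v\<^sub>c\<^sub>-\<^sub>1\<close> alone,
  and such a triangular perturbation of the identity is inverted coordinate by coordinate,
  with smooth inverse. Both constructions iterate a map whose \<open>c\<close>-th output only depends
  on the inputs below \<open>c\<close>; after \<open>CARD('n)\<close> iterations it is a fixed point.\<close>

section \<open>Continuously differentiable functions on Euclidean spaces\<close>

definition dir_deriv :: "'a::real_normed_vector \<Rightarrow> ('a \<Rightarrow> real) \<Rightarrow> 'a \<Rightarrow> real" where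
  "dir_deriv v f x = deriv (\<lambda>t. f (x + t *\<^sub>R v)) 0"

lemma has_derivative_along_line:
  assumes "(f has_derivative L) (at x)"
  shows "((\<lambda>t. f (x + t *\<^sub>R v)) has_field_derivative L v) (at 0)"
proof -
  have line: "((\<lambda>t. x + t *\<^sub>R v) has_derivative (\<lambda>t. t *\<^sub>R v)) (at 0)"
    by (rule derivative_eq_intros refl | simp)+
  have "((\<lambda>t. f (x + t *\<^sub>R v)) has_derivative (\<lambda>t. L (t *\<^sub>R v))) (at 0)"
    using has_derivative_compose[OF line, of f L] assms by simp
  moreover have "(\<lambda>t. L (t *\<^sub>R v)) = (\<lambda>t. L v * t)"
    using has_derivative_linear[OF assms] by (simp add: linear_scale mult.commute)
  ultimately show ?thesis
    by (simp add: has_field_derivative_def)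
qed

lemma dir_deriv_eq:
  assumes "(f has_derivative L) (at x)"
  shows "dir_deriv v f x = L v"
  unfolding dir_deriv_def by (rule DERIV_imp_deriv[OF has_derivative_along_line[OF assms]])

lemma differentiable_along_line:
  assumes "f differentiable (at x)"
  shows "((\<lambda>t. f (x + t *\<^sub>R v)) has_field_derivative dir_deriv v f x) (at 0)"
proof -
  obtain L where "(f has_derivative L) (at x)"
    using assms by (auto simp: differentiable_def)
  then show ?thesis
    by (simp add: dir_deriv_eq has_derivative_along_line)
qed

lemma has_field_derivative_along_line:
  fixes f :: "'a::real_normed_vector \<Rightarrow> real"
  assumes "\<And>y. ((\<lambda>t. f (y + t *\<^sub>R v)) has_field_derivative D y) (at 0)"
  shows "((\<lambda>t. f (x + t *\<^sub>R v)) has_field_derivative D (x + s *\<^sub>R v)) (at s)"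
proof -
  have "((\<lambda>t. f ((x + s *\<^sub>R v) + t *\<^sub>R v)) has_field_derivative D (x + s *\<^sub>R v)) (at 0)"
    by (rule assms)
  moreover have "(\<lambda>t. f ((x + s *\<^sub>R v) + t *\<^sub>R v)) = (\<lambda>t. f (x + (t + s) *\<^sub>R v))"
    by (simp add: scaleR_add_left add_ac)
  ultimately show ?thesis
    using DERIV_shift[of "\<lambda>t. f (x + t *\<^sub>R v)" "D (x + s *\<^sub>R v)" 0 s] by simp
qed

lemma has_derivative_dir_deriv:
  fixes f :: "'a::euclidean_space \<Rightarrow> real"
  assumes "f differentiable (at x)"
  shows "(f has_derivative (\<lambda>h. \<Sum>i\<in>Basis. (h \<bullet> i) * dir_deriv i f x)) (at x)"
proof -
  obtain L where L: "(f has_derivative L) (at x)"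
    using assms by (auto simp: differentiable_def)
  have "L h = (\<Sum>i\<in>Basis. (h \<bullet> i) * dir_deriv i f x)" for h
  proof -
    have "L h = L (\<Sum>i\<in>Basis. (h \<bullet> i) *\<^sub>R i)"
      by (simp add: euclidean_representation)
    also have "\<dots> = (\<Sum>i\<in>Basis. (h \<bullet> i) * L i)"
      using has_derivative_linear[OF L] by (simp add: linear_sum linear_scale)
    finally show ?thesis
      by (simp add: dir_deriv_eq[OF L])
  qed
  then have "L = (\<lambda>h. \<Sum>i\<in>Basis. (h \<bullet> i) * dir_deriv i f x)"
    by (rule ext)
  with L show ?thesis by simp
qed

lemma has_derivative_partials_insert:
  fixes f :: "'a::euclidean_space \<Rightarrow> real"
  assumes partial: "\<And>x. ((\<lambda>t. f (x + t *\<^sub>R j)) has_field_derivative D j x) (at 0)"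
    and cont: "\<And>i. i \<in> S \<Longrightarrow> continuous_on UNIV (D i)"
    and S_derivative: "\<And>x y. ((\<lambda>h. f (x + (\<Sum>i\<in>S. (h \<bullet> i) *\<^sub>R i))) has_derivative
      (\<lambda>k. \<Sum>i\<in>S. (k \<bullet> i) * D i (x + (\<Sum>i\<in>S. (y \<bullet> i) *\<^sub>R i)))) (at y)"
    and S: "finite S" "j \<notin> S"
  shows "((\<lambda>h. f (x + (\<Sum>i\<in>insert j S. (h \<bullet> i) *\<^sub>R i))) has_derivative
      (\<lambda>k. \<Sum>i\<in>insert j S. (k \<bullet> i) * D i (x + (\<Sum>i\<in>insert j S. (y \<bullet> i) *\<^sub>R i)))) (at y)"
proof -
  \<comment> \<open>Split off the \<open>j\<close>-th coordinate; the two partial derivatives are joined by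
    \<open>has_derivative_partialsI\<close>, which needs continuity of the one in the \<open>S\<close>-directions.\<close>
  define F where "F t h = f (x + t *\<^sub>R j + (\<Sum>i\<in>S. (h \<bullet> i) *\<^sub>R i))" for t h
  define F\<^sub>h where
    "F\<^sub>h t h = (\<Sum>i\<in>S. D i (x + t *\<^sub>R j + (\<Sum>i\<in>S. (h \<bullet> i) *\<^sub>R i)) *\<^sub>R blinfun_inner_left i)" for t h
  define w where "w = x + (\<Sum>i\<in>S. (y \<bullet> i) *\<^sub>R i)"
  have sum_insert: "(\<Sum>i\<in>insert j S. (h \<bullet> i) *\<^sub>R i) = (h \<bullet> j) *\<^sub>R j + (\<Sum>i\<in>S. (h \<bullet> i) *\<^sub>R i)" for h
    using S by simp
  have "(\<lambda>t. F t y) = (\<lambda>t. f (w + t *\<^sub>R j))"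
    by (simp add: F_def w_def algebra_simps)
  then have F_t: "((\<lambda>t. F t y) has_derivative (\<lambda>s. D j (w + (y \<bullet> j) *\<^sub>R j) * s)) (at (y \<bullet> j))"
    using has_field_derivative_along_line[of f j "D j", OF partial]
    by (simp add: has_field_derivative_def)
  have F_h: "((\<lambda>h. F t h) has_derivative blinfun_apply (F\<^sub>h t h)) (at h)" for t h
  proof -
    have "blinfun_apply (F\<^sub>h t h) =
        (\<lambda>k. \<Sum>i\<in>S. (k \<bullet> i) * D i ((x + t *\<^sub>R j) + (\<Sum>i\<in>S. (h \<bullet> i) *\<^sub>R i)))"
      by (simp add: F\<^sub>h_def blinfun.sum_left blinfun.scaleR_left mult.commute fun_eq_iff)
    with S_derivative[of "x + t *\<^sub>R j" h] show ?thesis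
      by (simp add: F_def)
  qed
  have "continuous_on UNIV (\<lambda>p. F\<^sub>h (fst p) (snd p))"
    unfolding F\<^sub>h_def using cont
    by (intro continuous_on_sum continuous_on_scaleR continuous_on_const ballI
        continuous_on_compose2[OF cont] continuous_intros) auto
  then have "continuous (at (y \<bullet> j, y) within UNIV \<times> UNIV) (\<lambda>(t, h). F\<^sub>h t h)"
    by (simp add: case_prod_unfold continuous_on_eq_continuous_at)
  then have partials: "((\<lambda>(t, h). F t h) has_derivative
      (\<lambda>(s, k). D j (w + (y \<bullet> j) *\<^sub>R j) * s + F\<^sub>h (y \<bullet> j) y k)) (at (y \<bullet> j, y) within UNIV \<times> UNIV)"
    by (intro has_derivative_partialsI F_t F_h) auto
  have pair: "((\<lambda>h. (h \<bullet> j, h)) has_derivative (\<lambda>k. (k \<bullet> j, k))) (at y)"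
    by (intro has_derivative_Pair bounded_linear_imp_has_derivative bounded_linear_inner_left
        has_derivative_ident)
  have "((\<lambda>h. F (h \<bullet> j) h) has_derivative
      (\<lambda>k. D j (w + (y \<bullet> j) *\<^sub>R j) * (k \<bullet> j) + F\<^sub>h (y \<bullet> j) y k)) (at y)"
    using has_derivative_compose[OF pair partials[unfolded UNIV_Times_UNIV]] by simp
  moreover have "F (h \<bullet> j) h = f (x + (\<Sum>i\<in>insert j S. (h \<bullet> i) *\<^sub>R i))" for h
    by (simp add: F_def sum_insert add.assoc)
  moreover have "D j (w + (y \<bullet> j) *\<^sub>R j) * (k \<bullet> j) + F\<^sub>h (y \<bullet> j) y k
      = (\<Sum>i\<in>insert j S. (k \<bullet> i) * D i (x + (\<Sum>i\<in>insert j S. (y \<bullet> i) *\<^sub>R i)))" for k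
    using S
    by (simp add: F\<^sub>h_def blinfun.sum_left blinfun.scaleR_left w_def sum_insert algebra_simps)
  ultimately show ?thesis by simp
qed

lemma has_derivative_continuous_partials:
  fixes f :: "'a::euclidean_space \<Rightarrow> real"
  assumes partial: "\<And>x i. i \<in> Basis \<Longrightarrow> ((\<lambda>t. f (x + t *\<^sub>R i)) has_field_derivative D i x) (at 0)"
    and cont: "\<And>i. i \<in> Basis \<Longrightarrow> continuous_on UNIV (D i)"
  shows "(f has_derivative (\<lambda>h. \<Sum>i\<in>Basis. (h \<bullet> i) * D i x)) (at x)"
proof -
  have "((\<lambda>h. f (x + (\<Sum>i\<in>S. (h \<bullet> i) *\<^sub>R i))) has_derivative
      (\<lambda>k. \<Sum>i\<in>S. (k \<bullet> i) * D i (x + (\<Sum>i\<in>S. (y \<bullet> i) *\<^sub>R i)))) (at y)"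
    if "finite S" "S \<subseteq> Basis" for S x y
    using that
  proof (induction S arbitrary: x y rule: finite_induct)
    case empty
    then show ?case by simp
  next
    case (insert j S)
    then show ?case
      by (intro has_derivative_partials_insert partial cont) auto
  qed
  from this[OF finite_Basis order_refl, of 0 x] show ?thesis
    by (simp add: euclidean_representation)
qed

text \<open>Unlike \<^const>\<open>Ck\<close>, this is available on every Euclidean space, in particular for
  functions of \<open>(v, t) \<in> real^'n \<times> real\<close>.\<close>
fun cont_diff :: "nat \<Rightarrow> ('a::euclidean_space \<Rightarrow> real) \<Rightarrow> bool" where
  "cont_diff 0 f \<longleftrightarrow> continuous_on UNIV f"
| "cont_diff (Suc k) f \<longleftrightarrow>
     (\<forall>x. f differentiable (at x)) \<and> (\<forall>i\<in>Basis. cont_diff k (dir_deriv i f))"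

lemma cont_diff_imp_continuous_on: "cont_diff k f \<Longrightarrow> continuous_on UNIV f"
proof (cases k)
  case (Suc m)
  assume "cont_diff k f"
  with Suc have "\<forall>x. f differentiable (at x)" by simp
  then show ?thesis
    by (intro continuous_at_imp_continuous_on ballI differentiable_imp_continuous_within) blast
qed simp

lemma cont_diff_SucD: "cont_diff (Suc k) f \<Longrightarrow> cont_diff k f"
proof (induction k arbitrary: f)
  case 0
  show ?case
    using cont_diff_imp_continuous_on[OF 0] by simp
qed simp

lemma cont_diff_has_derivative:
  "cont_diff (Suc k) f \<Longrightarrow> (f has_derivative (\<lambda>h. \<Sum>i\<in>Basis. (h \<bullet> i) * dir_deriv i f x)) (at x)"
  by (simp add: has_derivative_dir_deriv)

lemma cont_diff_SucI:
  assumes "\<And>x. (f has_derivative (\<lambda>h. \<Sum>i\<in>Basis. (h \<bullet> i) * D i x)) (at x)"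
    and "\<And>i. i \<in> Basis \<Longrightarrow> cont_diff k (D i)"
  shows "cont_diff (Suc k) f"
proof -
  have "dir_deriv i f = D i" if "i \<in> Basis" for i
  proof
    fix x
    have "dir_deriv i f x = (\<Sum>j\<in>Basis. (i \<bullet> j) * D j x)"
      by (rule dir_deriv_eq[OF assms(1)])
    also have "\<dots> = (\<Sum>j\<in>Basis. if j = i then D i x else 0)"
      using that by (intro sum.cong refl) (simp add: inner_Basis)
    finally show "dir_deriv i f x = D i x"
      using that by simp
  qed
  moreover have "f differentiable (at x)" for x
    using assms(1) by (rule differentiableI)
  ultimately show ?thesis
    using assms(2) by simp
qed

lemma cont_diff_SucI_partials:
  assumes "\<And>x i. i \<in> Basis \<Longrightarrow> ((\<lambda>t. f (x + t *\<^sub>R i)) has_field_derivative D i x) (at 0)"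
    and "\<And>i. i \<in> Basis \<Longrightarrow> cont_diff k (D i)"
  shows "cont_diff (Suc k) f"
proof (rule cont_diff_SucI[where D=D])
  show "(f has_derivative (\<lambda>h. \<Sum>i\<in>Basis. (h \<bullet> i) * D i x)) (at x)" for x
    using assms(1) cont_diff_imp_continuous_on[OF assms(2)]
    by (rule has_derivative_continuous_partials)
qed (rule assms(2))

lemma cont_diff_const: "cont_diff k (\<lambda>x. c)"
proof (induction k arbitrary: c)
  case (Suc k)
  show ?case
    by (rule cont_diff_SucI[where D="\<lambda>i x. 0"]) (simp_all add: Suc)
qed simp

lemma cont_diff_inner_left: "cont_diff k (\<lambda>x. x \<bullet> c)"
proof (cases k)
  case (Suc m)
  have "(\<Sum>i\<in>Basis. (h \<bullet> i) * (i \<bullet> c)) = h \<bullet> c" for h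
  proof -
    have "h \<bullet> c = (\<Sum>i\<in>Basis. (h \<bullet> i) *\<^sub>R i) \<bullet> c"
      by (simp add: euclidean_representation)
    then show ?thesis
      by (simp add: inner_sum_left)
  qed
  then have "(\<lambda>h. \<Sum>i\<in>Basis. (h \<bullet> i) * (i \<bullet> c)) = (\<lambda>h. h \<bullet> c)"
    by (rule ext)
  then have "((\<lambda>x. x \<bullet> c) has_derivative (\<lambda>h. \<Sum>i\<in>Basis. (h \<bullet> i) * (i \<bullet> c))) (at x)" for x
    using bounded_linear_imp_has_derivative[OF bounded_linear_inner_left] by simp
  then show ?thesis
    unfolding Suc by (rule cont_diff_SucI) (rule cont_diff_const)
qed (simp add: continuous_on_inner)

lemma cont_diff_add: "cont_diff k f \<Longrightarrow> cont_diff k g \<Longrightarrow> cont_diff k (\<lambda>x. f x + g x)"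
proof (induction k arbitrary: f g)
  case (Suc k)
  show ?case
  proof (rule cont_diff_SucI[where D="\<lambda>i x. dir_deriv i f x + dir_deriv i g x"])
    show "((\<lambda>x. f x + g x) has_derivative
        (\<lambda>h. \<Sum>i\<in>Basis. h \<bullet> i * (dir_deriv i f x + dir_deriv i g x))) (at x)" for x
      using has_derivative_add[OF Suc.prems[THEN cont_diff_has_derivative]]
      by (simp add: distrib_left sum.distrib)
  qed (use Suc in simp)
qed (simp add: continuous_on_add)

lemma cont_diff_mult: "cont_diff k f \<Longrightarrow> cont_diff k g \<Longrightarrow> cont_diff k (\<lambda>x. f x * g x)"
proof (induction k arbitrary: f g)
  case (Suc k)
  show ?case
  proof (rule cont_diff_SucI[where D="\<lambda>i x. f x * dir_deriv i g x + dir_deriv i f x * g x"])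
    show "((\<lambda>x. f x * g x) has_derivative
        (\<lambda>h. \<Sum>i\<in>Basis. h \<bullet> i * (f x * dir_deriv i g x + dir_deriv i f x * g x))) (at x)" for x
      using has_derivative_mult[OF Suc.prems[THEN cont_diff_has_derivative]]
      by (simp add: sum_distrib_left algebra_simps sum.distrib)
    have "cont_diff k f" "cont_diff k g"
      using cont_diff_SucD[OF Suc.prems(1)] cont_diff_SucD[OF Suc.prems(2)] .
    then show "cont_diff k (\<lambda>x. f x * dir_deriv i g x + dir_deriv i f x * g x)" if "i \<in> Basis" for i
      using Suc that by (intro cont_diff_add Suc.IH) auto
  qed
qed (simp add: continuous_on_mult)

lemma cont_diff_minus: "cont_diff k f \<Longrightarrow> cont_diff k (\<lambda>x. - f x)"
  using cont_diff_mult[OF cont_diff_const[of k "-1"], of f] by simp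

lemma cont_diff_diff: "cont_diff k f \<Longrightarrow> cont_diff k g \<Longrightarrow> cont_diff k (\<lambda>x. f x - g x)"
  using cont_diff_add[OF _ cont_diff_minus, of k f g] by simp

lemma cont_diff_sum:
  "finite S \<Longrightarrow> (\<And>s. s \<in> S \<Longrightarrow> cont_diff k (f s)) \<Longrightarrow> cont_diff k (\<lambda>x. \<Sum>s\<in>S. f s x)"
  by (induction S rule: finite_induct) (simp_all add: cont_diff_const cont_diff_add)

lemma cont_diff_prod:
  "finite S \<Longrightarrow> (\<And>s. s \<in> S \<Longrightarrow> cont_diff k (f s)) \<Longrightarrow> cont_diff k (\<lambda>x. \<Prod>s\<in>S. f s x)"
  by (induction S rule: finite_induct) (simp_all add: cont_diff_const cont_diff_mult)

lemma cont_diff_inverse: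
  "cont_diff k f \<Longrightarrow> (\<And>x. f x \<noteq> 0) \<Longrightarrow> cont_diff k (\<lambda>x. inverse (f x))"
proof (induction k arbitrary: f)
  case (Suc k)
  show ?case
  proof (rule cont_diff_SucI[where D="\<lambda>i x. - (inverse (f x) * dir_deriv i f x * inverse (f x))"])
    show "((\<lambda>x. inverse (f x)) has_derivative
        (\<lambda>h. \<Sum>i\<in>Basis. h \<bullet> i * - (inverse (f x) * dir_deriv i f x * inverse (f x)))) (at x)" for x
      using Deriv.has_derivative_inverse[OF Suc.prems(2) cont_diff_has_derivative[OF Suc.prems(1)]]
      by (simp add: sum_distrib_left sum_distrib_right sum_negf mult.assoc mult.left_commute)
    have "cont_diff k (\<lambda>x. inverse (f x))"
      using Suc.IH[OF cont_diff_SucD[OF Suc.prems(1)] Suc.prems(2)] .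
    then show "cont_diff k (\<lambda>x. - (inverse (f x) * dir_deriv i f x * inverse (f x)))"
      if "i \<in> Basis" for i
      using Suc.prems(1) that by (intro cont_diff_minus cont_diff_mult) auto
  qed
qed (simp add: continuous_on_inverse)

lemma cont_diff_divide:
  "cont_diff k f \<Longrightarrow> cont_diff k g \<Longrightarrow> (\<And>x. g x \<noteq> 0) \<Longrightarrow> cont_diff k (\<lambda>x. f x / g x)"
  using cont_diff_mult[OF _ cont_diff_inverse, of k f g] by (simp add: divide_inverse)

lemma dir_deriv_compose:
  fixes f :: "'b::euclidean_space \<Rightarrow> real" and G :: "'a::euclidean_space \<Rightarrow> 'b"
  assumes f: "f differentiable (at (G x))" and G: "G differentiable (at x)"
  shows "dir_deriv i (\<lambda>x. f (G x)) x =
    (\<Sum>j\<in>Basis. dir_deriv i (\<lambda>x. G x \<bullet> j) x * dir_deriv j f (G x))"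
proof -
  obtain G' where G': "(G has_derivative G') (at x)"
    using G by (auto simp: differentiable_def)
  have "dir_deriv i (\<lambda>x. G x \<bullet> j) x = G' i \<bullet> j" for j
    by (rule dir_deriv_eq) (rule has_derivative_inner_left[OF G'])
  then show ?thesis
    using dir_deriv_eq[OF has_derivative_compose[OF G' has_derivative_dir_deriv[OF f]]]
    by (simp add: mult.commute)
qed

lemma cont_diff_compose:
  fixes f :: "'b::euclidean_space \<Rightarrow> real" and G :: "'a::euclidean_space \<Rightarrow> 'b"
  assumes "cont_diff k f" and "\<And>j. j \<in> Basis \<Longrightarrow> cont_diff k (\<lambda>x. G x \<bullet> j)"
  shows "cont_diff k (\<lambda>x. f (G x))"
  using assms
proof (induction k arbitrary: f)
  case 0
  then have "continuous_on UNIV G"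
    by (simp add: continuous_on_componentwise[where f=G])
  with 0 show ?case
    using continuous_on_compose2[of UNIV f UNIV G] by simp
next
  case (Suc k)
  have G: "G differentiable (at x)" for x
    by (rule differentiable_componentwise_within[THEN iffD2]) (use Suc.prems(2) in simp)
  have f: "f differentiable (at y)" for y
    using Suc.prems(1) by simp
  have "(\<lambda>x. f (G x)) differentiable (at x)" for x
    using differentiable_chain_at[OF G f] by (simp add: o_def)
  moreover have "cont_diff k (dir_deriv i (\<lambda>x. f (G x)))" if i: "i \<in> Basis" for i
  proof -
    have "dir_deriv i (\<lambda>x. f (G x))
        = (\<lambda>x. \<Sum>j\<in>Basis. dir_deriv i (\<lambda>x. G x \<bullet> j) x * dir_deriv j f (G x))"
      by (simp add: fun_eq_iff dir_deriv_compose[OF f G])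
    moreover have "cont_diff k (\<lambda>x. dir_deriv i (\<lambda>x. G x \<bullet> j) x * dir_deriv j f (G x))"
      if j: "j \<in> Basis" for j
    proof (rule cont_diff_mult)
      show "cont_diff k (dir_deriv i (\<lambda>x. G x \<bullet> j))"
        using Suc.prems(2)[OF j] i by simp
      show "cont_diff k (\<lambda>x. dir_deriv j f (G x))"
      proof (rule Suc.IH)
        show "cont_diff k (dir_deriv j f)"
          using Suc.prems(1) j by simp
        show "cont_diff k (\<lambda>x. G x \<bullet> j')" if "j' \<in> Basis" for j'
          using Suc.prems(2)[OF that] by (rule cont_diff_SucD)
      qed
    qed
    ultimately show ?thesis
      by (simp add: cont_diff_sum)
  qed
  ultimately show ?case by simp
qed

lemma Basis_prod_cases:
  assumes "(j :: 'a::euclidean_space \<times> 'b::euclidean_space) \<in> Basis"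
  obtains i where "i \<in> Basis" "j = (i, 0)" | i where "i \<in> Basis" "j = (0, i)"
  using assms by (auto simp: Basis_prod_def)

lemma has_field_derivative_parametric_integral:
  fixes h :: "'a::euclidean_space \<times> real \<Rightarrow> real"
  assumes h: "cont_diff (Suc k) h" and i: "i \<in> Basis"
  shows "((\<lambda>t. integral {0..1} (\<lambda>u. h (w + t *\<^sub>R i, u))) has_field_derivative
           integral {0..1} (\<lambda>u. dir_deriv (i, 0) h (w, u))) (at 0)"
proof -
  have "h differentiable (at p)" for p
    using h by (simp only: cont_diff.simps)
  then have "((\<lambda>s. h ((w, u) + s *\<^sub>R (i, 0))) has_field_derivative
      dir_deriv (i, 0) h ((w, u) + t *\<^sub>R (i, 0))) (at t)" for t u
    by (intro has_field_derivative_along_line[OF differentiable_along_line])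
  then have line: "((\<lambda>s. h (w + s *\<^sub>R i, u)) has_field_derivative
      dir_deriv (i, 0) h (w + t *\<^sub>R i, u)) (at t)" for t u
    by simp
  have "cont_diff k (dir_deriv (i, 0) h)"
    using h i by (simp add: Basis_prod_def)
  with h have h_cont: "continuous_on UNIV h" and dh_cont: "continuous_on UNIV (dir_deriv (i, 0) h)"
    by (simp_all only: cont_diff_imp_continuous_on)
  have "((\<lambda>t. integral (cbox 0 1) (\<lambda>u. h (w + t *\<^sub>R i, u))) has_field_derivative
      integral (cbox 0 1) (\<lambda>u. dir_deriv (i, 0) h (w + 0 *\<^sub>R i, u))) (at 0 within UNIV)"
  proof (intro leibniz_rule_field_derivative[where fx="\<lambda>t u. dir_deriv (i, 0) h (w + t *\<^sub>R i, u)"]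
      line)
    show "(\<lambda>u. h (w + t *\<^sub>R i, u)) integrable_on cbox 0 1" for t
      by (rule integrable_continuous, rule continuous_on_compose2[OF h_cont])
        (intro continuous_intros, simp)
    show "continuous_on (UNIV \<times> cbox 0 1) (\<lambda>(t, u). dir_deriv (i, 0) h (w + t *\<^sub>R i, u))"
      unfolding case_prod_unfold
      by (rule continuous_on_compose2[OF dh_cont]) (intro continuous_intros, simp)
  qed simp_all
  then show ?thesis
    by simp
qed

lemma cont_diff_parametric_integral:
  fixes h :: "'a::euclidean_space \<times> real \<Rightarrow> real"
  assumes "cont_diff k h"
  shows "cont_diff k (\<lambda>w. integral {0..1} (\<lambda>u. h (w, u)))"
  using assms
proof (induction k arbitrary: h)
  case 0
  then have "continuous_on (UNIV \<times> cbox 0 1) (\<lambda>(w, u). h (w, u))"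
    by (auto intro: continuous_on_subset)
  from integral_continuous_on_param[OF this] show ?case
    by simp
next
  case (Suc k)
  show ?case
  proof (rule cont_diff_SucI_partials)
    show "((\<lambda>t. integral {0..1} (\<lambda>u. h (x + t *\<^sub>R i, u))) has_field_derivative
        integral {0..1} (\<lambda>u. dir_deriv (i, 0) h (x, u))) (at 0)" if "i \<in> Basis" for x i
      using Suc.prems that by (rule has_field_derivative_parametric_integral)
    show "cont_diff k (\<lambda>w. integral {0..1} (\<lambda>u. dir_deriv (i, 0) h (w, u)))" if "i \<in> Basis" for i
      using Suc.prems that by (intro Suc.IH) (simp add: Basis_prod_def)
  qed
qed

lemma cont_diff_fix_snd:
  fixes F :: "'a::euclidean_space \<times> 'b::euclidean_space \<Rightarrow> real"
  assumes "cont_diff k F"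
  shows "cont_diff k (\<lambda>x. F (x, b))"
  using assms
proof (rule cont_diff_compose)
  fix j :: "'a \<times> 'b"
  assume "j \<in> Basis"
  then show "cont_diff k (\<lambda>x. (x, b) \<bullet> j)"
    by (cases rule: Basis_prod_cases) (simp_all add: cont_diff_inner_left cont_diff_const)
qed

lemma cont_diff_fix_fst:
  fixes F :: "'a::euclidean_space \<times> 'b::euclidean_space \<Rightarrow> real"
  assumes "cont_diff k F"
  shows "cont_diff k (\<lambda>y. F (a, y))"
  using assms
proof (rule cont_diff_compose)
  fix j :: "'a \<times> 'b"
  assume "j \<in> Basis"
  then show "cont_diff k (\<lambda>y. (a, y) \<bullet> j)"
    by (cases rule: Basis_prod_cases) (simp_all add: cont_diff_inner_left cont_diff_const)
qed

lemma partial_deriv_eq_dir_deriv: "partial_deriv i f = dir_deriv (axis i 1) f"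
  by (simp add: fun_eq_iff partial_deriv_def dir_deriv_def)

lemma Ck_iff_cont_diff: "Ck k f \<longleftrightarrow> cont_diff k (f :: real^'n \<Rightarrow> real)"
proof (induction k arbitrary: f)
  case (Suc k)
  show ?case
  proof
    assume f: "Ck (Suc k) f"
    show "cont_diff (Suc k) f"
    proof (rule cont_diff_SucI_partials[where D="\<lambda>b. dir_deriv b f"])
      fix x and b :: "real^'n"
      assume "b \<in> Basis"
      then obtain j where j: "b = axis j 1"
        by (auto simp: Basis_vec_def)
      have "(\<lambda>t. f (x + t *\<^sub>R axis j 1)) differentiable (at 0)"
        using f by simp
      then show "((\<lambda>t. f (x + t *\<^sub>R b)) has_field_derivative dir_deriv b f x) (at 0)"
        unfolding j dir_deriv_def by (simp add: DERIV_deriv_iff_real_differentiable)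
      show "cont_diff k (dir_deriv b f)"
        using f Suc.IH by (simp add: j partial_deriv_eq_dir_deriv)
    qed
  next
    assume f: "cont_diff (Suc k) f"
    have "(\<lambda>t. f (x + t *\<^sub>R axis i 1)) differentiable (at 0)" for x i
      using f differentiable_along_line[of f x "axis i 1"] unfolding has_field_derivative_def
      by (auto intro: differentiableI)
    moreover have "Ck k (partial_deriv i f)" for i
      using f Suc.IH by (simp add: partial_deriv_eq_dir_deriv)
    ultimately show "Ck (Suc k) f"
      using cont_diff_imp_continuous_on[OF f] by simp
  qed
qed simp

lemma smooth_fun_iff_cont_diff: "smooth_fun f \<longleftrightarrow> (\<forall>k. cont_diff k f)"
  by (simp add: smooth_fun_def Ck_iff_cont_diff)

lemma smooth_fun_partial_deriv: "smooth_fun f \<Longrightarrow> smooth_fun (partial_deriv i f)"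
  unfolding smooth_fun_def by (metis Ck.simps(2))

lemma cont_diff_vec_nth: "cont_diff k (\<lambda>w::real^'n. w $ c)"
  using cont_diff_inner_left[of k "axis c 1 :: real^'n"] by (simp add: inner_axis)

lemma cont_diff_compose_vec:
  fixes f :: "real^'n \<Rightarrow> real" and G :: "'a::euclidean_space \<Rightarrow> real^'n"
  assumes "cont_diff k f" "\<And>j. cont_diff k (\<lambda>x. G x $ j)"
  shows "cont_diff k (\<lambda>x. f (G x))"
  using assms(1) by (rule cont_diff_compose) (auto simp: Basis_vec_def inner_axis assms(2))

lemma cont_diff_det:
  fixes M :: "'a::euclidean_space \<Rightarrow> real^'n^'n"
  assumes "\<And>i j. cont_diff k (\<lambda>z. M z $ i $ j)"
  shows "cont_diff k (\<lambda>z. det (M z))"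
  unfolding det_def using assms
  by (intro cont_diff_sum cont_diff_mult[OF cont_diff_const] cont_diff_prod)
    (simp_all add: finite_permutations)

lemma matrix_inv_cramer:
  fixes A :: "real^'n^'n"
  assumes "invertible A"
  shows "matrix_inv A $ c $ d = det (\<chi> i j. if j = c then axis d 1 $ i else A $ i $ j) / det A"
proof -
  have "A ** matrix_inv A = mat 1"
    using assms unfolding invertible_def matrix_inv_def by (rule someI_ex[THEN conjunct1])
  then have "A *v (matrix_inv A *v axis d 1) = axis d 1"
    by (simp add: matrix_vector_mul_assoc)
  then have "matrix_inv A *v axis d 1 =
      (\<chi> k. det (\<chi> i j. if j = k then axis d 1 $ i else A $ i $ j) / det A)"
    using cramer[of A] assms by (simp add: invertible_det_nz)
  then show ?thesis
    by (simp add: matrix_vector_mult_basis column_def vec_eq_iff)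
qed

lemma cont_diff_christoffel:
  assumes g: "pseudo_riemannian_metric g"
  shows "cont_diff k (christoffel g c a b)"
proof -
  have g_smooth: "smooth_fun (\<lambda>z. g z $ i $ j)" for i j
    using g by (simp add: pseudo_riemannian_metric_def)
  then have g_k: "cont_diff k (\<lambda>z. g z $ i $ j)" for i j
    by (simp add: smooth_fun_iff_cont_diff)
  have dg_k: "cont_diff k (partial_deriv e (\<lambda>z. g z $ i $ j))" for e i j
    using smooth_fun_partial_deriv[OF g_smooth] by (simp add: smooth_fun_iff_cont_diff)
  have inv: "invertible (g z)" for z
    using g by (simp add: pseudo_riemannian_metric_def)
  have "cont_diff k (\<lambda>z. det (\<chi> i j. if j = c' then axis d 1 $ i else g z $ i $ j) / det (g z))"
    for c' d
  proof (rule cont_diff_divide[OF cont_diff_det cont_diff_det[OF g_k]])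
    show "cont_diff k (\<lambda>z. (\<chi> i j. if j = c' then axis d 1 $ i else g z $ i $ j) $ i $ j)" for i j
      by (cases "j = c'") (simp_all add: cont_diff_const g_k)
    show "det (g z) \<noteq> 0" for z
      using inv by (simp add: invertible_det_nz)
  qed
  then have ginv_k: "cont_diff k (\<lambda>z. matrix_inv (g z) $ c' $ d)" for c' d
    by (simp add: matrix_inv_cramer[OF inv])
  show ?thesis
    unfolding christoffel_def[abs_def]
    by (intro cont_diff_mult[OF cont_diff_const] cont_diff_sum cont_diff_mult[OF ginv_k]
        cont_diff_add cont_diff_diff dg_k finite)
qed

section \<open>Antiderivatives and triangular systems\<close>

text \<open>This is \<open>\<integral>\<^sub>0\<^sup>t h\<close>, written so that smooth dependence on parameters follows from
  \<open>cont_diff_parametric_integral\<close>.\<close>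
definition antideriv :: "(real \<Rightarrow> real) \<Rightarrow> real \<Rightarrow> real" where
  "antideriv h t = t * integral {0..1} (\<lambda>u. h (t * u))"

lemma antideriv_nonneg: "t \<ge> 0 \<Longrightarrow> antideriv h t = integral {0..t} h"
proof (cases "t = 0")
  case False
  assume "t \<ge> 0"
  with False have "t > 0" by simp
  then show ?thesis
    using integral_stretch_real[of t 0 t h] by (simp add: antideriv_def)
qed (simp add: antideriv_def)

lemma antideriv_nonpos: "t \<le> 0 \<Longrightarrow> antideriv h t = - integral {t..0} h"
proof (cases "t = 0")
  case False
  assume "t \<le> 0"
  with False have "t < 0" by simp
  then show ?thesis
    using integral_stretch_real[of t t 0 h] image_affinity_atLeastAtMost_div[of t 0 t 0]
    by (simp add: antideriv_def)
qed (simp add: antideriv_def)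

lemma antideriv_diff:
  assumes h: "continuous_on UNIV h" and "a \<le> s"
  shows "antideriv h s - antideriv h a = integral {a..s} h"
proof -
  have I: "h integrable_on {x..y}" for x y
    using h by (simp add: continuous_on_subset integrable_continuous_interval)
  consider "0 \<le> a" | "s \<le> 0" | "a \<le> 0" "0 \<le> s"
    using \<open>a \<le> s\<close> by linarith
  then show ?thesis
  proof cases
    case 1
    with \<open>a \<le> s\<close> show ?thesis
      using Henstock_Kurzweil_Integration.integral_combine[OF 1 \<open>a \<le> s\<close> I]
      by (simp add: antideriv_nonneg)
  next
    case 2
    with \<open>a \<le> s\<close> show ?thesis
      using Henstock_Kurzweil_Integration.integral_combine[OF \<open>a \<le> s\<close> 2 I]
      by (simp add: antideriv_nonpos)
  next
    case 3
    then show ?thesis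
      using Henstock_Kurzweil_Integration.integral_combine[OF 3 I]
      by (simp add: antideriv_nonneg antideriv_nonpos)
  qed
qed

lemma has_real_derivative_antideriv:
  assumes h: "continuous_on UNIV h"
  shows "(antideriv h has_real_derivative h t) (at t)"
proof -
  have t: "t \<in> {t - 1<..<t + 1}"
    by simp
  have "((\<lambda>x. integral {t - 1..x} h) has_real_derivative h t) (at t within {t - 1..t + 1})"
    using h by (intro integral_has_real_derivative) (auto intro: continuous_on_subset)
  then have "((\<lambda>x. integral {t - 1..x} h) has_real_derivative h t) (at t)"
    using at_within_open[OF t open_greaterThanLessThan]
    by (metis has_field_derivative_subset greaterThanLessThan_subseteq_atLeastAtMost_iff order_refl)
  then have "((\<lambda>x. antideriv h (t - 1) + integral {t - 1..x} h) has_real_derivative h t) (at t)"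
    by (auto intro!: derivative_eq_intros)
  then show ?thesis
  proof (rule has_field_derivative_transform_within_open[OF _ open_greaterThanLessThan t])
    show "antideriv h (t - 1) + integral {t - 1..x} h = antideriv h x"
      if "x \<in> {t - 1<..<t + 1}" for x
      using antideriv_diff[OF h, of "t - 1" x] that by simp
  qed
qed

lemma continuous_on_antideriv: "continuous_on UNIV h \<Longrightarrow> continuous_on UNIV (antideriv h)"
  using has_real_derivative_antideriv by (meson DERIV_isCont continuous_at_imp_continuous_on)

lemma antideriv_const_minus:
  assumes "continuous_on UNIV h"
  shows "antideriv (\<lambda>s. a - h s) t = t * a - antideriv h t"
proof -
  have "(\<lambda>u. h (t * u)) integrable_on {0..1}"
    using assms by (intro integrable_continuous_interval continuous_on_compose2[OF assms]) 
      (auto intro: continuous_intros)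
  then have "integral {0..1} (\<lambda>u. a - h (t * u)) = a - integral {0..1} (\<lambda>u. h (t * u))"
    using Henstock_Kurzweil_Integration.integral_diff[of "\<lambda>u. a" "{0..1}" "\<lambda>u. h (t * u)"]
      integrable_const_ivl[of a 0 1]
    by simp
  then show ?thesis
    by (simp add: antideriv_def right_diff_distrib)
qed

lemma cont_diff_antideriv:
  fixes H :: "'a::euclidean_space \<times> real \<Rightarrow> real"
  assumes "cont_diff k H"
  shows "cont_diff k (\<lambda>p. antideriv (\<lambda>s. H (fst p, s)) (snd p))"
proof -
  define G where "G q = (fst (fst q), snd (fst q) * snd q)" for q :: "('a \<times> real) \<times> real"
  have "cont_diff k (\<lambda>q. G q \<bullet> j)" if "j \<in> Basis" for j
    using that
  proof (cases rule: Basis_prod_cases)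
    case (1 i)
    then have "(\<lambda>q. G q \<bullet> j) = (\<lambda>q. q \<bullet> ((i, 0), 0))"
      by (simp add: fun_eq_iff G_def inner_prod_def)
    then show ?thesis
      by (simp add: cont_diff_inner_left)
  next
    case (2 i)
    then have "(\<lambda>q. G q \<bullet> j) = (\<lambda>q. (q \<bullet> ((0, 1), 0)) * (q \<bullet> (0, 1)))"
      by (simp add: fun_eq_iff G_def inner_prod_def)
    then show ?thesis
      by (simp add: cont_diff_mult cont_diff_inner_left)
  qed
  then have "cont_diff k (\<lambda>p. integral {0..1} (\<lambda>u. H (G (p, u))))"
    by (intro cont_diff_parametric_integral cont_diff_compose[OF assms])
  then have "cont_diff k (\<lambda>p. (p \<bullet> (0, 1)) * integral {0..1} (\<lambda>u. H (G (p, u))))"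
    by (intro cont_diff_mult cont_diff_inner_left)
  then show ?thesis
    by (simp add: antideriv_def G_def inner_prod_def)
qed

definition strictly_triangular :: "(('i::linorder \<Rightarrow> 'a) \<Rightarrow> 'i \<Rightarrow> 'b) \<Rightarrow> bool" where
  "strictly_triangular T \<longleftrightarrow> (\<forall>u u' c. (\<forall>j<c. u j = u' j) \<longrightarrow> T u c = T u' c)"

definition order_rank :: "'i::{finite,linorder} \<Rightarrow> nat" where
  "order_rank c = card {j. j < c}"

lemma order_rank_less: "j < c \<Longrightarrow> order_rank j < order_rank c"
  unfolding order_rank_def by (rule psubset_card_mono) auto

lemma order_rank_less_card: "order_rank (c::'i::{finite,linorder}) < CARD('i)"
  unfolding order_rank_def by (rule psubset_card_mono) auto

lemma finite_linorder_less_induct: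
  assumes step: "\<And>c. (\<And>j. j < c \<Longrightarrow> P j) \<Longrightarrow> P (c::'i::{finite,linorder})"
  shows "P c"
proof (induction "order_rank c" arbitrary: c rule: less_induct)
  case less
  show ?case
    by (rule step) (rule less, erule order_rank_less)
qed

lemma strictly_triangular_iterate_fixpoint:
  fixes T :: "('i::{finite,linorder} \<Rightarrow> 'a) \<Rightarrow> 'i \<Rightarrow> 'a"
  assumes T: "strictly_triangular T"
  shows "T ((T ^^ CARD('i)) u) = (T ^^ CARD('i)) u"
proof -
  have "(T ^^ k) u c = (T ^^ Suc k) u c" if "order_rank c < k" for c k
    using that
  proof (induction c arbitrary: k rule: finite_linorder_less_induct)
    case (1 c)
    then obtain k' where k: "k = Suc k'"
      by (cases k) auto
    have "(T ^^ k') u j = (T ^^ Suc k') u j" if "j < c" for j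
      using 1 that order_rank_less[OF that] k by auto
    then have "T ((T ^^ k') u) c = T ((T ^^ Suc k') u) c"
      using T by (simp add: strictly_triangular_def)
    then show ?case
      by (simp add: k)
  qed
  then show ?thesis
    using order_rank_less_card[where 'i='i] by (simp add: fun_eq_iff)
qed

lemma strictly_triangular_fixpoint_unique:
  fixes T :: "('i::{finite,linorder} \<Rightarrow> 'a) \<Rightarrow> 'i \<Rightarrow> 'a"
  assumes "strictly_triangular T" "T u = u" "T u' = u'"
  shows "u = u'"
proof
  show "u c = u' c" for c
  proof (induction c rule: finite_linorder_less_induct)
    case (1 c)
    then have "T u c = T u' c"
      using assms(1) by (simp add: strictly_triangular_def)
    then show ?case
      using assms(2,3) by simp
  qed
qed

definition triangular_solve ::
  "('n::{finite,linorder} \<Rightarrow> (real, 'n) vec \<Rightarrow> real) \<Rightarrow> (real, 'n) vec \<Rightarrow> (real, 'n) vec" where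
  "triangular_solve f w = vec_lambda (((\<lambda>u c. w $ c - f c (vec_lambda u)) ^^ CARD('n)) (\<lambda>c. 0))"

context
  fixes f :: "'n::{finite,linorder} \<Rightarrow> (real, 'n) vec \<Rightarrow> real"
  assumes lower: "\<And>c v v'. (\<forall>j<c. v $ j = v' $ j) \<Longrightarrow> f c v = f c v'"
begin

lemma strictly_triangular_solve_step: "strictly_triangular (\<lambda>u c. w $ c - f c (vec_lambda u))"
  unfolding strictly_triangular_def
proof (intro allI impI)
  fix u u' :: "'n \<Rightarrow> real" and c
  assume "\<forall>j<c. u j = u' j"
  then have "f c (vec_lambda u) = f c (vec_lambda u')"
    by (intro lower) simp
  then show "w $ c - f c (vec_lambda u) = w $ c - f c (vec_lambda u')"
    by simp
qed

lemma triangular_solve_eq: "triangular_solve f w $ c + f c (triangular_solve f w) = w $ c"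
proof -
  have "w $ c - f c (triangular_solve f w) = triangular_solve f w $ c"
    using strictly_triangular_iterate_fixpoint[OF strictly_triangular_solve_step, of w "\<lambda>c. 0"]
    by (simp add: triangular_solve_def fun_eq_iff)
  then show ?thesis
    by simp
qed

lemma inj_triangular_perturbation: "inj (\<lambda>v. \<chi> c. v $ c + f c v)"
proof (rule injI)
  fix v v' :: "(real, 'n) vec"
  assume "(\<chi> c. v $ c + f c v) = (\<chi> c. v' $ c + f c v')"
  then have eq: "v $ c + f c v = v' $ c + f c v'" for c
    by (simp add: vec_eq_iff)
  define w where "w = (\<chi> c. v $ c + f c v)"
  have "(\<lambda>c. w $ c - f c (vec_lambda (vec_nth v))) = vec_nth v"
    by (simp add: w_def fun_eq_iff)
  moreover have "(\<lambda>c. w $ c - f c (vec_lambda (vec_nth v'))) = vec_nth v'"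
    by (simp add: w_def fun_eq_iff eq)
  ultimately have "vec_nth v = vec_nth v'"
    by (rule strictly_triangular_fixpoint_unique[OF strictly_triangular_solve_step])
  then show "v = v'"
    by (simp add: vec_eq_iff)
qed

lemma cont_diff_triangular_solve:
  assumes "\<And>c k. cont_diff k (f c)"
  shows "cont_diff k (\<lambda>w. triangular_solve f w $ c)"
proof -
  have "cont_diff k (\<lambda>w. ((\<lambda>u c. w $ c - f c (vec_lambda u)) ^^ m) (\<lambda>c. 0) c)" for m c
  proof (induction m arbitrary: c)
    case (Suc m)
    have "cont_diff k (\<lambda>w. f c (\<chi> j. ((\<lambda>u c. w $ c - f c (vec_lambda u)) ^^ m) (\<lambda>c. 0) j))"
      by (rule cont_diff_compose_vec[OF assms]) (simp add: Suc.IH)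
    from cont_diff_diff[OF cont_diff_vec_nth this] show ?case
      by simp
  qed (simp add: cont_diff_const)
  then show ?thesis
    by (simp add: triangular_solve_def)
qed

lemma triangular_perturbation_diffeomorphism:
  assumes smooth: "\<And>c k. cont_diff k (f c)"
  shows "diffeomorphism (\<lambda>v. \<chi> c. v $ c + f c v)"
proof -
  let ?F = "\<lambda>v. \<chi> c. v $ c + f c v"
  have F_solve: "?F (triangular_solve f w) = w" for w
    by (simp add: vec_eq_iff triangular_solve_eq)
  then have "surj ?F"
    by (rule surjI)
  with inj_triangular_perturbation have "bij ?F"
    by (rule bijI)
  moreover have "inv ?F = triangular_solve f"
    using inj_triangular_perturbation F_solve by (intro ext inv_f_eq)
  moreover have "smooth_map ?F"
    unfolding smooth_map_def smooth_fun_iff_cont_diff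
    using cont_diff_add[OF cont_diff_vec_nth smooth] by simp
  moreover have "smooth_map (triangular_solve f)"
    unfolding smooth_map_def smooth_fun_iff_cont_diff
    using cont_diff_triangular_solve[OF smooth] by simp
  ultimately show ?thesis
    by (simp add: diffeomorphism_def)
qed

end

section \<open>Geodesics\<close>

lemma has_vector_derivative_vec_lambda:
  fixes F :: "'n::finite \<Rightarrow> real \<Rightarrow> real"
  assumes "\<And>c. ((\<lambda>t. F c t) has_real_derivative D c) (at t)"
  shows "((\<lambda>t. \<chi> c. F c t) has_vector_derivative (\<chi> c. D c)) (at t)"
  unfolding has_vector_derivative_def
proof (subst has_derivative_componentwise_within, intro ballI)
  fix i :: "real^'n"
  assume "i \<in> Basis"
  then obtain j where j: "i = axis j 1"
    by (auto simp: Basis_vec_def)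
  have "(\<lambda>x. x * D j) = (*) (D j)"
    by (simp add: fun_eq_iff mult.commute)
  with assms[of j] have "((\<lambda>t. F j t) has_derivative (\<lambda>x. x * D j)) (at t)"
    by (simp add: has_field_derivative_def)
  then show "((\<lambda>t. (\<chi> c. F c t) \<bullet> i) has_derivative (\<lambda>x. (x *\<^sub>R (\<chi> c. D c)) \<bullet> i)) (at t)"
    by (simp add: j inner_axis)
qed

lemma has_real_derivative_vec_nth:
  assumes "(\<gamma> has_vector_derivative D) (at t)"
  shows "((\<lambda>t. \<gamma> t $ c) has_real_derivative D $ c) (at t)"
proof -
  have "((\<lambda>t. \<gamma> t $ c) has_derivative (\<lambda>x. (x *\<^sub>R D) $ c)) (at t)"
    using assms unfolding has_vector_derivative_def
    by (rule bounded_linear.has_derivative[OF bounded_linear_vec_nth])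
  moreover have "(\<lambda>x. (x *\<^sub>R D) $ c) = (*) (D $ c)"
    by (simp add: fun_eq_iff mult.commute)
  ultimately show ?thesis
    by (simp add: has_field_derivative_def)
qed

lemma has_real_derivative_zero_imp_zero:
  assumes "is_interval I" "t0 \<in> I"
    and "\<And>t. t \<in> I \<Longrightarrow> (F has_real_derivative 0) (at t)" "F t0 = 0"
  shows "\<forall>t\<in>I. F t = 0"
proof -
  have "\<exists>C. \<forall>t\<in>I. F t = C"
    by (rule has_field_derivative_zero_constant[OF is_interval_convex[OF assms(1)]])
      (rule has_field_derivative_at_within[OF assms(3)])
  with assms(2,4) show ?thesis
    by auto
qed

definition christoffel_quad ::
  "(real^'n::finite \<Rightarrow> real^'n^'n) \<Rightarrow> 'n \<Rightarrow> real^'n \<Rightarrow> real^'n \<Rightarrow> real" where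
  "christoffel_quad g c z y = (\<Sum>a\<in>UNIV. \<Sum>b\<in>UNIV. christoffel g c a b z * y $ a * y $ b)"

definition geodesic_ode :: "(real^'n::finite \<Rightarrow> real^'n^'n) \<Rightarrow> real set \<Rightarrow>
    (real \<Rightarrow> real^'n) \<Rightarrow> (real \<Rightarrow> real^'n) \<Rightarrow> (real \<Rightarrow> real^'n) \<Rightarrow> bool" where
  "geodesic_ode g I \<gamma> \<gamma>' \<gamma>'' \<longleftrightarrow> (\<forall>t\<in>I. (\<gamma> has_vector_derivative \<gamma>' t) (at t) \<and>
     (\<gamma>' has_vector_derivative \<gamma>'' t) (at t) \<and>
     (\<forall>c. \<gamma>'' t $ c + christoffel_quad g c (\<gamma> t) (\<gamma>' t) = 0))"

lemma is_geodesic_iff: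
  "is_geodesic g I \<gamma> \<longleftrightarrow> open I \<and> is_interval I \<and> (\<exists>\<gamma>' \<gamma>''. geodesic_ode g I \<gamma> \<gamma>' \<gamma>'')"
  by (simp add: is_geodesic_def geodesic_ode_def christoffel_quad_def)

lemma geodesic_ode_subset: "geodesic_ode g J \<gamma> \<gamma>' \<gamma>'' \<Longrightarrow> I \<subseteq> J \<Longrightarrow> geodesic_ode g I \<gamma> \<gamma>' \<gamma>''"
  by (auto simp: geodesic_ode_def)

lemma geodesic_ode_shift:
  assumes "geodesic_ode g UNIV \<gamma> \<gamma>' \<gamma>''"
  shows "geodesic_ode g UNIV (\<lambda>t. \<gamma> (t - s)) (\<lambda>t. \<gamma>' (t - s)) (\<lambda>t. \<gamma>'' (t - s))"
proof -
  have shift: "((\<lambda>t. F (t - s)) has_vector_derivative D (t - s)) (at t)"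
    if "\<And>t. (F has_vector_derivative D t) (at t)" for F :: "real \<Rightarrow> real^'n" and D t
  proof -
    have "((\<lambda>t. t - s) has_vector_derivative 1) (at t)"
      using DERIV_diff[OF DERIV_ident DERIV_const[of s]]
      by (simp add: has_real_derivative_iff_has_vector_derivative)
    from vector_diff_chain_at[OF this that[of "t - s"]] show ?thesis
      by (simp add: o_def)
  qed
  show ?thesis
    using assms by (simp add: geodesic_ode_def shift)
qed

type_synonym coord_path = "(real \<Rightarrow> real) \<times> (real \<Rightarrow> real)"

locale triangular_christoffel =
  fixes g :: "real^('n::{finite,linorder}) \<Rightarrow> real^('n::{finite,linorder})^('n::{finite,linorder})"
  assumes metric: "pseudo_riemannian_metric g"
    and christoffel_triangular: "\<And>a b c z. christoffel g c a b z \<noteq> 0 \<Longrightarrow> a < c \<and> b < c"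
    and christoffel_lower: "\<And>a b c z w. (\<forall>j. j < c \<longrightarrow> z $ j = w $ j) \<Longrightarrow>
      christoffel g c a b z = christoffel g c a b w"
begin

lemma christoffel_quad_lower:
  assumes "\<And>j. j < c \<Longrightarrow> z $ j = z' $ j \<and> y $ j = y' $ j"
  shows "christoffel_quad g c z y = christoffel_quad g c z' y'"
  unfolding christoffel_quad_def
proof (intro sum.cong refl)
  fix a b
  show "christoffel g c a b z * y $ a * y $ b = christoffel g c a b z' * y' $ a * y' $ b"
  proof (cases "a < c \<and> b < c")
    case True
    moreover have "christoffel g c a b z = christoffel g c a b z'"
      using assms by (intro christoffel_lower) blast
    ultimately show ?thesis
      using assms by simp
  next
    case False
    then have "christoffel g c a b z = 0" "christoffel g c a b z' = 0"
      using christoffel_triangular by blast+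
    then show ?thesis
      by simp
  qed
qed

lemma cont_diff_christoffel_quad:
  fixes Z Y :: "'a::euclidean_space \<Rightarrow> (real, 'n) vec"
  assumes "\<And>j. cont_diff k (\<lambda>p. Z p $ j)" "\<And>j. cont_diff k (\<lambda>p. Y p $ j)"
  shows "cont_diff k (\<lambda>p. christoffel_quad g c (Z p) (Y p))"
proof -
  have "cont_diff k (\<lambda>p. christoffel g c a b (Z p))" for a b
    using cont_diff_christoffel[OF metric] assms(1) by (rule cont_diff_compose_vec)
  then show ?thesis
    unfolding christoffel_quad_def using assms
    by (intro cont_diff_sum cont_diff_mult) auto
qed

lemma geodesic_ode_unique:
  assumes I: "is_interval I" "t0 \<in> I"
    and \<gamma>: "geodesic_ode g I \<gamma> \<gamma>' \<gamma>''" and \<delta>: "geodesic_ode g I \<delta> \<delta>' \<delta>''"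
    and init: "\<gamma> t0 = \<delta> t0" "\<gamma>' t0 = \<delta>' t0"
  shows "\<forall>t\<in>I. \<gamma> t = \<delta> t"
proof -
  note zero = has_real_derivative_zero_imp_zero[OF I]
  have "\<forall>t\<in>I. \<gamma> t $ c = \<delta> t $ c \<and> \<gamma>' t $ c = \<delta>' t $ c" for c
  proof (induction c rule: finite_linorder_less_induct)
    case (1 c)
    have acc: "\<gamma>'' t $ c = \<delta>'' t $ c" if t: "t \<in> I" for t
    proof -
      have "christoffel_quad g c (\<gamma> t) (\<gamma>' t) = christoffel_quad g c (\<delta> t) (\<delta>' t)"
        by (rule christoffel_quad_lower) (use 1 t in blast)
      moreover have "\<gamma>'' t $ c + christoffel_quad g c (\<gamma> t) (\<gamma>' t) = 0"
        "\<delta>'' t $ c + christoffel_quad g c (\<delta> t) (\<delta>' t) = 0"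
        using \<gamma> \<delta> t by (simp_all add: geodesic_ode_def)
      ultimately show ?thesis
        by simp
    qed
    have "((\<lambda>t. \<gamma>' t $ c - \<delta>' t $ c) has_real_derivative 0) (at t)" if t: "t \<in> I" for t
    proof -
      have "(\<gamma>' has_vector_derivative \<gamma>'' t) (at t)" "(\<delta>' has_vector_derivative \<delta>'' t) (at t)"
        using \<gamma> \<delta> t by (simp_all add: geodesic_ode_def)
      from DERIV_diff[OF this[THEN has_real_derivative_vec_nth[where c=c]]] show ?thesis
        by (simp add: acc[OF t])
    qed
    from zero[OF this] have vel: "\<forall>t\<in>I. \<gamma>' t $ c - \<delta>' t $ c = 0"
      by (simp add: init)
    have "((\<lambda>t. \<gamma> t $ c - \<delta> t $ c) has_real_derivative 0) (at t)" if t: "t \<in> I" for t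
    proof -
      have "(\<gamma> has_vector_derivative \<gamma>' t) (at t)" "(\<delta> has_vector_derivative \<delta>' t) (at t)"
        using \<gamma> \<delta> t by (simp_all add: geodesic_ode_def)
      from DERIV_diff[OF this[THEN has_real_derivative_vec_nth[where c=c]]] show ?thesis
        using vel t by simp
    qed
    from zero[OF this] have "\<forall>t\<in>I. \<gamma> t $ c - \<delta> t $ c = 0"
      by (simp add: init)
    with vel show ?case
      by simp
  qed
  then show ?thesis
    by (simp add: vec_eq_iff)
qed

definition christoffel_along :: "('n \<Rightarrow> coord_path) \<Rightarrow> 'n \<Rightarrow> real \<Rightarrow> real" where
  "christoffel_along U c s = christoffel_quad g c (\<chi> j. fst (U j) s) (\<chi> j. snd (U j) s)"

text \<open>\<open>U j\<close> is a candidate for the pair (\<open>\<gamma>\<^sub>j\<close>, \<open>\<gamma>\<^sub>j'\<close>). One step solves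
  \<open>\<gamma>\<^sub>c'' = - christoffel_along U c\<close> with \<open>\<gamma>\<^sub>c(0) = P\<^sub>c\<close>, \<open>\<gamma>\<^sub>c'(0) = v\<^sub>c\<close> by integrating twice;
  by triangularity the right-hand side only involves the coordinates below \<open>c\<close>.\<close>
definition geodesic_step ::
  "(real, 'n) vec \<Rightarrow> (real, 'n) vec \<Rightarrow> ('n \<Rightarrow> coord_path) \<Rightarrow> 'n \<Rightarrow> coord_path" where
  "geodesic_step P v U c =
     ((\<lambda>t. P $ c + antideriv (\<lambda>s. v $ c - antideriv (christoffel_along U c) s) t),
      (\<lambda>t. v $ c - antideriv (christoffel_along U c) t))"

definition geodesic_coords :: "(real, 'n) vec \<Rightarrow> (real, 'n) vec \<Rightarrow> 'n \<Rightarrow> coord_path"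
  where
  "geodesic_coords P v = (geodesic_step P v ^^ CARD('n)) (\<lambda>c. (\<lambda>t. 0, \<lambda>t. 0))"

definition geod :: "(real, 'n) vec \<Rightarrow> (real, 'n) vec \<Rightarrow> real \<Rightarrow> (real, 'n) vec" where
  "geod P v t = (\<chi> c. fst (geodesic_coords P v c) t)"

definition geod_vel :: "(real, 'n) vec \<Rightarrow> (real, 'n) vec \<Rightarrow> real \<Rightarrow> (real, 'n) vec" where
  "geod_vel P v t = (\<chi> c. snd (geodesic_coords P v c) t)"

definition geod_acc :: "(real, 'n) vec \<Rightarrow> (real, 'n) vec \<Rightarrow> real \<Rightarrow> (real, 'n) vec" where
  "geod_acc P v t = (\<chi> c. - christoffel_along (geodesic_coords P v) c t)"

lemma christoffel_along_lower:
  "(\<And>j. j < c \<Longrightarrow> U j = U' j) \<Longrightarrow> christoffel_along U c = christoffel_along U' c"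
  unfolding christoffel_along_def by (intro ext christoffel_quad_lower) simp

lemma strictly_triangular_geodesic_step: "strictly_triangular (geodesic_step P v)"
  unfolding strictly_triangular_def
proof (intro allI impI)
  fix U U' :: "'n \<Rightarrow> coord_path" and c
  assume "\<forall>j<c. U j = U' j"
  then have "christoffel_along U c = christoffel_along U' c"
    by (intro christoffel_along_lower) simp
  then show "geodesic_step P v U c = geodesic_step P v U' c"
    by (simp add: geodesic_step_def)
qed

lemma geodesic_coords_unfold: "geodesic_coords P v c = geodesic_step P v (geodesic_coords P v) c"
  using strictly_triangular_iterate_fixpoint[OF strictly_triangular_geodesic_step]
  by (simp add: geodesic_coords_def)

lemma geodesic_coords_snd:
  "snd (geodesic_coords P v c) =
    (\<lambda>t. v $ c - antideriv (christoffel_along (geodesic_coords P v) c) t)"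
  by (subst geodesic_coords_unfold) (simp add: geodesic_step_def)

lemma geodesic_coords_fst:
  "fst (geodesic_coords P v c) = (\<lambda>t. P $ c + antideriv (snd (geodesic_coords P v c)) t)"
  by (subst (1 2) geodesic_coords_unfold) (simp add: geodesic_step_def)

lemma cont_diff_geodesic_coords:
  "cont_diff k (\<lambda>p. fst (geodesic_coords P (fst p) c) (snd p)) \<and>
   cont_diff k (\<lambda>p. snd (geodesic_coords P (fst p) c) (snd p))"
proof -
  define Z :: "'n \<Rightarrow> coord_path" where "Z = (\<lambda>c. (\<lambda>t. 0, \<lambda>t. 0))"
  have "cont_diff k (\<lambda>p. fst ((geodesic_step P (fst p) ^^ m) Z c) (snd p)) \<and>
        cont_diff k (\<lambda>p. snd ((geodesic_step P (fst p) ^^ m) Z c) (snd p))" for m c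
  proof (induction m arbitrary: c)
    case 0
    then show ?case
      by (simp add: Z_def cont_diff_const)
  next
    case (Suc m)
    define U where "U v = (geodesic_step P v ^^ m) Z" for v
    define V where "V p = fst p $ c - antideriv (christoffel_along (U (fst p)) c) (snd p)"
      for p :: "(real, 'n) vec \<times> real"
    have "cont_diff k (\<lambda>p. christoffel_along (U (fst p)) c (snd p))"
      unfolding christoffel_along_def using Suc.IH
      by (intro cont_diff_christoffel_quad) (simp_all add: U_def)
    then have "cont_diff k (\<lambda>p. antideriv (\<lambda>s. christoffel_along (U (fst p)) c s) (snd p))"
      using cont_diff_antideriv[of k "\<lambda>p. christoffel_along (U (fst p)) c (snd p)"] by simp
    moreover have "cont_diff k (\<lambda>p::(real, 'n) vec \<times> real. fst p $ c)"
      using cont_diff_inner_left[of k "(axis c 1, 0) :: (real, 'n) vec \<times> real"]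
      by (simp add: inner_prod_def inner_axis)
    ultimately have V: "cont_diff k V"
      unfolding V_def by (rule cont_diff_diff[rotated])
    then have "cont_diff k (\<lambda>p. P $ c + antideriv (\<lambda>s. V (fst p, s)) (snd p))"
      by (intro cont_diff_add cont_diff_const cont_diff_antideriv)
    moreover have "fst ((geodesic_step P v ^^ Suc m) Z c) t = P $ c + antideriv (\<lambda>s. V (v, s)) t"
      "snd ((geodesic_step P v ^^ Suc m) Z c) t = V (v, t)" for v t
      by (simp_all only: funpow.simps(2) o_apply U_def[symmetric] geodesic_step_def V_def
          fst_conv snd_conv)
    ultimately show ?case
      using V by simp
  qed
  then show ?thesis
    by (simp add: geodesic_coords_def Z_def)
qed

lemma continuous_on_geodesic_coords:
  "continuous_on UNIV (fst (geodesic_coords P v c))"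
  "continuous_on UNIV (snd (geodesic_coords P v c))"
  using cont_diff_fix_fst[OF conjunct1[OF cont_diff_geodesic_coords[of 0 P c]], of v]
    cont_diff_fix_fst[OF conjunct2[OF cont_diff_geodesic_coords[of 0 P c]], of v]
  by simp_all

lemma continuous_on_christoffel_along:
  "continuous_on UNIV (christoffel_along (geodesic_coords P v) c)"
proof -
  have "cont_diff 0 (\<lambda>s. christoffel_quad g c
      (\<chi> j. fst (geodesic_coords P v j) s) (\<chi> j. snd (geodesic_coords P v j) s))"
    by (rule cont_diff_christoffel_quad) (simp_all add: continuous_on_geodesic_coords)
  then show ?thesis
    by (simp add: christoffel_along_def)
qed

lemma geodesic_ode_geod: "geodesic_ode g UNIV (geod P v) (geod_vel P v) (geod_acc P v)"
  unfolding geodesic_ode_def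
proof (intro ballI conjI allI)
  fix t :: real and c
  show "(geod P v has_vector_derivative geod_vel P v t) (at t)"
    unfolding geod_def geod_vel_def
  proof (rule has_vector_derivative_vec_lambda)
    fix c
    show "((\<lambda>t. fst (geodesic_coords P v c) t) has_real_derivative
        snd (geodesic_coords P v c) t) (at t)"
      using DERIV_add[OF DERIV_const
          has_real_derivative_antideriv[OF continuous_on_geodesic_coords(2)]]
      by (subst geodesic_coords_fst) simp
  qed
  show "(geod_vel P v has_vector_derivative geod_acc P v t) (at t)"
    unfolding geod_vel_def geod_acc_def
  proof (rule has_vector_derivative_vec_lambda)
    fix c
    show "((\<lambda>t. snd (geodesic_coords P v c) t) has_real_derivative
        - christoffel_along (geodesic_coords P v) c t) (at t)"
      using DERIV_diff[OF DERIV_const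
          has_real_derivative_antideriv[OF continuous_on_christoffel_along]]
      by (subst geodesic_coords_snd) simp
  qed
  show "geod_acc P v t $ c + christoffel_quad g c (geod P v t) (geod_vel P v t) = 0"
    by (simp add: geod_acc_def geod_def geod_vel_def christoffel_along_def)
qed

lemma geod_0: "geod P v 0 = P"
  by (simp add: geod_def vec_eq_iff geodesic_coords_fst antideriv_def)

lemma geod_vel_0: "geod_vel P v 0 = v"
  by (simp add: geod_vel_def vec_eq_iff geodesic_coords_snd antideriv_def)

theorem geodesically_complete: "geodesically_complete g"
  unfolding geodesically_complete_def
proof (intro allI impI)
  fix I \<gamma>
  assume "is_geodesic g I \<gamma>"
  then obtain \<gamma>' \<gamma>'' where I: "is_interval I" and \<gamma>: "geodesic_ode g I \<gamma> \<gamma>' \<gamma>''"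
    by (auto simp: is_geodesic_iff)
  show "\<exists>\<delta>. is_geodesic g UNIV \<delta> \<and> (\<forall>t\<in>I. \<delta> t = \<gamma> t)"
  proof (cases "I = {}")
    case True
    then show ?thesis
      using geodesic_ode_geod[of 0 0] by (auto simp: is_geodesic_iff)
  next
    case False
    then obtain t0 where t0: "t0 \<in> I"
      by blast
    let ?\<delta> = "\<lambda>t. geod (\<gamma> t0) (\<gamma>' t0) (t - t0)"
    have \<delta>: "geodesic_ode g UNIV ?\<delta>
        (\<lambda>t. geod_vel (\<gamma> t0) (\<gamma>' t0) (t - t0)) (\<lambda>t. geod_acc (\<gamma> t0) (\<gamma>' t0) (t - t0))"
      by (rule geodesic_ode_shift[OF geodesic_ode_geod])
    have "\<forall>t\<in>I. \<gamma> t = ?\<delta> t"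
      by (rule geodesic_ode_unique[OF I t0 \<gamma> geodesic_ode_subset[OF \<delta> subset_UNIV]])
        (simp_all add: geod_0 geod_vel_0)
    with \<delta> show ?thesis
      by (auto simp: is_geodesic_iff)
  qed
qed

lemma exp_map_eq_geod: "exp_map g P v = geod P v 1"
  unfolding exp_map_def
proof (rule the_equality)
  have "vector_derivative (geod P v) (at 0) = geod_vel P v 0"
    using geodesic_ode_geod[of P v] by (intro vector_derivative_at) (simp add: geodesic_ode_def)
  then show "\<exists>I \<gamma>. {0..1} \<subseteq> I \<and> is_geodesic g I \<gamma> \<and> \<gamma> 0 = P \<and>
      vector_derivative \<gamma> (at 0) = v \<and> \<gamma> 1 = geod P v 1"
    using geodesic_ode_geod
    by (intro exI[of _ UNIV] exI[of _ "geod P v"]) (auto simp: is_geodesic_iff geod_0 geod_vel_0)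
next
  fix q
  assume "\<exists>I \<gamma>. {0..1} \<subseteq> I \<and> is_geodesic g I \<gamma> \<and> \<gamma> 0 = P \<and>
      vector_derivative \<gamma> (at 0) = v \<and> \<gamma> 1 = q"
  then obtain I \<gamma> \<gamma>' \<gamma>'' where sub: "{0..1} \<subseteq> I" and I: "is_interval I"
    and \<gamma>: "geodesic_ode g I \<gamma> \<gamma>' \<gamma>''"
    and init: "\<gamma> 0 = P" "vector_derivative \<gamma> (at 0) = v" and q: "\<gamma> 1 = q"
    by (auto simp: is_geodesic_iff)
  have "0 \<in> I" "1 \<in> I"
    using sub by auto
  have "vector_derivative \<gamma> (at 0) = \<gamma>' 0"
    using \<gamma> \<open>0 \<in> I\<close> by (intro vector_derivative_at) (simp add: geodesic_ode_def)
  then have "\<forall>t\<in>I. \<gamma> t = geod P v t"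
    using init
    by (intro geodesic_ode_unique[OF I \<open>0 \<in> I\<close> \<gamma>
          geodesic_ode_subset[OF geodesic_ode_geod subset_UNIV]])
      (simp_all add: geod_0 geod_vel_0)
  with \<open>1 \<in> I\<close> q show "q = geod P v 1"
    by simp
qed

lemma geodesic_coords_fst_eq:
  "fst (geodesic_coords P v c) t =
    P $ c + t * v $ c - antideriv (antideriv (christoffel_along (geodesic_coords P v) c)) t"
  using antideriv_const_minus[where a="v $ c" and t=t,
      OF continuous_on_antideriv[OF continuous_on_christoffel_along[of P v c]]]
  by (simp add: geodesic_coords_fst geodesic_coords_snd)

lemma christoffel_along_geodesic_coords_lower:
  "(\<forall>j<c. v $ j = v' $ j) \<Longrightarrow>
    christoffel_along (geodesic_coords P v) c = christoffel_along (geodesic_coords P v') c"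
proof (induction c rule: finite_linorder_less_induct)
  case (1 c)
  have "geodesic_coords P v j = geodesic_coords P v' j" if "j < c" for j
  proof -
    have "\<forall>i<j. v $ i = v' $ i"
      using "1.prems" that by auto
    with "1.IH"[OF that]
    have "christoffel_along (geodesic_coords P v) j = christoffel_along (geodesic_coords P v') j" .
    moreover have "v $ j = v' $ j"
      using "1.prems" that by blast
    ultimately show ?thesis
      by (simp add: prod_eq_iff geodesic_coords_snd geodesic_coords_fst_eq[abs_def])
  qed
  then show ?case
    by (rule christoffel_along_lower)
qed

lemma exp_map_diffeomorphism: "diffeomorphism (exp_map g P)"
proof -
  define f where "f c v = fst (geodesic_coords P v c) 1 - v $ c" for c v
  have "exp_map g P = (\<lambda>v. \<chi> c. v $ c + f c v)"
    by (simp add: fun_eq_iff exp_map_eq_geod geod_def f_def)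
  moreover have "f c v = f c v'" if "\<forall>j<c. v $ j = v' $ j" for c v v'
    using christoffel_along_geodesic_coords_lower[OF that, of P] that
    by (simp add: f_def geodesic_coords_fst_eq)
  moreover have "cont_diff k (f c)" for c k
    using cont_diff_diff[OF cont_diff_fix_snd[OF conjunct1[OF cont_diff_geodesic_coords]]
        cont_diff_vec_nth]
    by (simp add: f_def[abs_def])
  ultimately show ?thesis
    using triangular_perturbation_diffeomorphism[of f] by simp
qed

end

theorem lemma2p1:
  fixes g :: "real^('n::{finite,linorder}) \<Rightarrow> real^('n::{finite,linorder})^('n::{finite,linorder})"
  assumes metric: "pseudo_riemannian_metric g"
    and triangular: "\<And>a b c z. christoffel g c a b z \<noteq> 0 \<Longrightarrow> a < c \<and> b < c"
    and dep: "\<And>a b c z w. (\<forall>j. j < c \<longrightarrow> z $ j = w $ j) \<Longrightarrow>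
                christoffel g c a b z = christoffel g c a b w"
  shows "geodesically_complete g \<and> (\<forall>P. diffeomorphism (exp_map g P))"
proof -
  interpret triangular_christoffel g
    by (rule triangular_christoffel.intro[OF metric triangular dep])
  show ?thesis
    using geodesically_complete exp_map_diffeomorphism by blast
qed

end
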